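(* Let $(G=(V,E),w,k)$ be an instance of the Min-WED problem such that $0\le\min\{\min\{w(x):x\in V\},k\}$. Let $M=\max\{\sum_{x\in V}w(x),k\}+1$, let $w'(x)=M\cdot|N_G[x]|-w(x)$ for all $x\in V$, and let $k'=M\cdot|V|-k$. Then $(G,w,k)$ is a yes instance of the Min-WED problem if and only if $(G^2,w',k')$ is a yes instance of the MWIS problem.
   Context: All graphs are finite, simple and undirected. $N_G[x]$ is the closed neighborhood of $x$ in $G$ (the neighbors of $x$ together with $x$). A vertex dominates itself and its neighbors. An efficient dominating set of $G=(V,E)$ is a set $D\subseteq V$ such that every vertex of $V$ is dominated by exactly one vertex of $D$. The square $G^2=(V,E^2)$ has distinct $u,v$ adjacent iff $uv\in E$ or $u,v$ have a common neighbor in $G$. Min-WED: given $G=(V,E)$, $w:V\to\mathbb{Z}$ and an integer $k$, decide whether $G$ has an efficient dominating set $D$ with $\sum_{x\in D}w(x)\le k$. MWIS: given a graph $H$, weights $w':V(H)\to\mathbb{Z}$ and an integer $k'$, decide whether $H$ has an independent set $I$ with $\sum_{x\in I}w'(x)\ge k'$. *)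

theory Defs
  imports Main
begin

definition simple_graph :: "'a set \<Rightarrow> ('a \<Rightarrow> 'a \<Rightarrow> bool) \<Rightarrow> bool" where
  "simple_graph V E \<longleftrightarrow> finite V \<and>
     (\<forall>u v. E u v \<longrightarrow> u \<in> V \<and> v \<in> V \<and> u \<noteq> v \<and> E v u)"

definition closed_nbhd :: "'a set \<Rightarrow> ('a \<Rightarrow> 'a \<Rightarrow> bool) \<Rightarrow> 'a \<Rightarrow> 'a set" where
  "closed_nbhd V E x = {y \<in> V. y = x \<or> E x y}"

definition efficient_dom_set :: "'a set \<Rightarrow> ('a \<Rightarrow> 'a \<Rightarrow> bool) \<Rightarrow> 'a set \<Rightarrow> bool" where
  "efficient_dom_set V E D \<longleftrightarrow> D \<subseteq> V \<and>
     (\<forall>v\<in>V. card {d \<in> D. v \<in> closed_nbhd V E d} = 1)"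

definition square_edge :: "'a set \<Rightarrow> ('a \<Rightarrow> 'a \<Rightarrow> bool) \<Rightarrow> 'a \<Rightarrow> 'a \<Rightarrow> bool" where
  "square_edge V E u v \<longleftrightarrow> u \<noteq> v \<and> (E u v \<or> (\<exists>z\<in>V. E u z \<and> E z v))"

definition independent_set :: "'a set \<Rightarrow> ('a \<Rightarrow> 'a \<Rightarrow> bool) \<Rightarrow> 'a set \<Rightarrow> bool" where
  "independent_set V E I \<longleftrightarrow> I \<subseteq> V \<and> (\<forall>u\<in>I. \<forall>v\<in>I. \<not> E u v)"

definition min_wed_yes :: "'a set \<Rightarrow> ('a \<Rightarrow> 'a \<Rightarrow> bool) \<Rightarrow> ('a \<Rightarrow> int) \<Rightarrow> int \<Rightarrow> bool" where
  "min_wed_yes V E w k \<longleftrightarrow> (\<exists>D. efficient_dom_set V E D \<and> (\<Sum>x\<in>D. w x) \<le> k)"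

definition mwis_yes :: "'a set \<Rightarrow> ('a \<Rightarrow> 'a \<Rightarrow> bool) \<Rightarrow> ('a \<Rightarrow> int) \<Rightarrow> int \<Rightarrow> bool" where
  "mwis_yes V E w k \<longleftrightarrow> (\<exists>I. independent_set V E I \<and> (\<Sum>x\<in>I. w x) \<ge> k)"

end

theory Submission
  imports Defs "HOL-Library.Disjoint_Sets"
begin

text \<open>\<open>D\<close> is an efficient dominating set iff its closed neighbourhoods partition \<open>V\<close>, and
\<open>I\<close> is independent in \<open>G\<^sup>2\<close> iff its closed neighbourhoods are pairwise disjoint. For
such \<open>I\<close> we get \<open>w'(I) = M \<cdot> |\<Union>\<^sub>x\<^sub>\<in>\<^sub>I N[x]| - w(I)\<close>. Since \<open>w \<ge> 0\<close> and \<open>M > k\<close>, missing even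
one vertex of \<open>V\<close> costs more than \<open>k\<close>, so \<open>w'(I) \<ge> k' = M|V| - k\<close> forces the
neighbourhoods to cover \<open>V\<close>, and then it says exactly \<open>w(I) \<le> k\<close>.\<close>

lemma closed_nbhd_subset: "closed_nbhd V E x \<subseteq> V"
  unfolding closed_nbhd_def by auto

lemma finite_closed_nbhd: "finite V \<Longrightarrow> finite (closed_nbhd V E x)"
  using closed_nbhd_subset finite_subset by metis

lemma square_edge_iff_closed_nbhds_meet:
  assumes "simple_graph V E" "u \<in> V" "v \<in> V"
  shows "square_edge V E u v \<longleftrightarrow> u \<noteq> v \<and> closed_nbhd V E u \<inter> closed_nbhd V E v \<noteq> {}"
proof -
  have sym: "E x y \<longleftrightarrow> E y x" for x y
    using assms(1) unfolding simple_graph_def by blast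
  have "(E u v \<or> (\<exists>z\<in>V. E u z \<and> E z v)) \<longleftrightarrow>
        (\<exists>y\<in>V. (y = u \<or> E u y) \<and> (y = v \<or> E v y))" if "u \<noteq> v"
    using that assms(2,3) sym by blast
  then show ?thesis
    unfolding square_edge_def closed_nbhd_def by blast
qed

lemma independent_set_square_iff:
  assumes "simple_graph V E"
  shows "independent_set V (square_edge V E) I \<longleftrightarrow>
    I \<subseteq> V \<and> disjoint_family_on (closed_nbhd V E) I"
proof (cases "I \<subseteq> V")
  case True
  then have "\<not> square_edge V E u v \<longleftrightarrow> (u \<noteq> v \<longrightarrow> closed_nbhd V E u \<inter> closed_nbhd V E v = {})"
    if "u \<in> I" "v \<in> I" for u v
    using square_edge_iff_closed_nbhds_meet[OF assms] that by blast
  with True show ?thesis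
    unfolding independent_set_def disjoint_family_on_def by simp
next
  case False
  then show ?thesis unfolding independent_set_def by simp
qed

lemma card_Collect_eq_1_iff: "card {x \<in> A. P x} = 1 \<longleftrightarrow> (\<exists>!x. x \<in> A \<and> P x)"
proof
  assume "card {x \<in> A. P x} = 1"
  then obtain z where "{x \<in> A. P x} = {z}" by (rule card_1_singletonE)
  then show "\<exists>!x. x \<in> A \<and> P x" by (auto simp: set_eq_iff)
next
  assume "\<exists>!x. x \<in> A \<and> P x"
  then obtain z where "{x \<in> A. P x} = {z}" by auto
  then show "card {x \<in> A. P x} = 1" by simp
qed

lemma ex1_cover_iff_disjoint_family_on:
  assumes "\<And>i. i \<in> I \<Longrightarrow> A i \<subseteq> V"
  shows "(\<forall>v\<in>V. \<exists>!i. i \<in> I \<and> v \<in> A i) \<longleftrightarrow> disjoint_family_on A I \<and> (\<Union>i\<in>I. A i) = V"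
proof
  assume unique: "\<forall>v\<in>V. \<exists>!i. i \<in> I \<and> v \<in> A i"
  have "A m \<inter> A n = {}" if "m \<in> I" "n \<in> I" "m \<noteq> n" for m n
  proof (rule ccontr)
    assume "A m \<inter> A n \<noteq> {}"
    then obtain v where "v \<in> A m" "v \<in> A n" by blast
    moreover have "v \<in> V" using assms \<open>m \<in> I\<close> \<open>v \<in> A m\<close> by blast
    ultimately show False using unique that by blast
  qed
  moreover have "V \<subseteq> (\<Union>i\<in>I. A i)" using unique by (metis UN_I subsetI ex1E)
  ultimately show "disjoint_family_on A I \<and> (\<Union>i\<in>I. A i) = V"
    using assms unfolding disjoint_family_on_def by blast
next
  assume "disjoint_family_on A I \<and> (\<Union>i\<in>I. A i) = V"
  then show "\<forall>v\<in>V. \<exists>!i. i \<in> I \<and> v \<in> A i"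
    by (auto simp: disjoint_family_on_def)
qed

lemma efficient_dom_set_iff:
  "efficient_dom_set V E D \<longleftrightarrow>
    D \<subseteq> V \<and> disjoint_family_on (closed_nbhd V E) D \<and> (\<Union>d\<in>D. closed_nbhd V E d) = V"
  unfolding efficient_dom_set_def card_Collect_eq_1_iff
    ex1_cover_iff_disjoint_family_on[of D "closed_nbhd V E" V, OF closed_nbhd_subset] ..

lemma big_M_forces_equality:
  fixes M a k :: int and m n :: nat
  assumes "M * int n - k \<le> M * int m - a" "m \<le> n" "0 \<le> a" "0 \<le> k" "k < M"
  shows "m = n"
proof (rule ccontr)
  assume "m \<noteq> n"
  with assms(2) have "int m + 1 \<le> int n" by simp
  with assms(4,5) have "M * (int m + 1) \<le> M * int n" by (simp add: mult_left_mono)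
  with assms(1,3,5) show False by (simp add: algebra_simps)
qed

lemma sum_weight_closed_nbhds:
  assumes "finite V" "I \<subseteq> V" "disjoint_family_on (closed_nbhd V E) I"
  shows "(\<Sum>x\<in>I. M * int (card (closed_nbhd V E x)) - w x) =
    M * int (card (\<Union>x\<in>I. closed_nbhd V E x)) - (\<Sum>x\<in>I. w x)"
proof -
  have "card (\<Union>x\<in>I. closed_nbhd V E x) = (\<Sum>x\<in>I. card (closed_nbhd V E x))"
    using assms finite_subset by (intro card_UN_disjoint') (auto intro: finite_closed_nbhd)
  then show ?thesis
    by (simp add: sum_subtractf sum_distrib_left)
qed

lemma shifted_weight_reaches_bound_iff:
  assumes "finite V" "I \<subseteq> V" "disjoint_family_on (closed_nbhd V E) I"
    and "\<forall>x\<in>I. 0 \<le> w x" "0 \<le> k" "k < M"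
  shows "M * int (card V) - k \<le> (\<Sum>x\<in>I. M * int (card (closed_nbhd V E x)) - w x) \<longleftrightarrow>
    (\<Union>x\<in>I. closed_nbhd V E x) = V \<and> (\<Sum>x\<in>I. w x) \<le> k"
    (is "_ \<le> _ \<longleftrightarrow> ?U = V \<and> _")
proof -
  have sub: "?U \<subseteq> V" by (rule UN_least[OF closed_nbhd_subset])
  note weight = sum_weight_closed_nbhds[OF assms(1-3), of M w]
  show ?thesis
  proof
    assume "M * int (card V) - k \<le> (\<Sum>x\<in>I. M * int (card (closed_nbhd V E x)) - w x)"
    then have big: "M * int (card V) - k \<le> M * int (card ?U) - (\<Sum>x\<in>I. w x)"
      by (simp only: weight)
    have "card ?U = card V"
    proof (rule big_M_forces_equality[OF big])
      show "card ?U \<le> card V" using assms(1) sub by (rule card_mono)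
      show "0 \<le> (\<Sum>x\<in>I. w x)" using assms(4) by (simp add: sum_nonneg)
    qed (use assms(5,6) in auto)
    with sub assms(1) have "?U = V" by (simp add: card_subset_eq)
    with big show "?U = V \<and> (\<Sum>x\<in>I. w x) \<le> k" by simp
  qed (simp add: weight)
qed

theorem lemma5:
  fixes V :: "'a set" and E :: "'a \<Rightarrow> 'a \<Rightarrow> bool" and w :: "'a \<Rightarrow> int" and k :: int
  assumes "simple_graph V E"
    and "\<forall>x\<in>V. 0 \<le> w x"
    and "0 \<le> k"
  defines "M \<equiv> max (\<Sum>x\<in>V. w x) k + 1"
  defines "w' \<equiv> (\<lambda>x. M * int (card (closed_nbhd V E x)) - w x)"
  defines "k' \<equiv> M * int (card V) - k"
  shows "min_wed_yes V E w k \<longleftrightarrow> mwis_yes V (square_edge V E) w' k'"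
proof -
  have "finite V" using assms(1) unfolding simple_graph_def by blast
  have "k < M" unfolding M_def by simp
  have "k' \<le> (\<Sum>x\<in>I. w' x) \<longleftrightarrow> (\<Union>x\<in>I. closed_nbhd V E x) = V \<and> (\<Sum>x\<in>I. w x) \<le> k"
    if "I \<subseteq> V" "disjoint_family_on (closed_nbhd V E) I" for I
    unfolding k'_def w'_def
    using shifted_weight_reaches_bound_iff[OF \<open>finite V\<close> that] assms(2,3) \<open>k < M\<close> that(1)
    by blast
  then show ?thesis
    unfolding min_wed_yes_def mwis_yes_def efficient_dom_set_iff
      independent_set_square_iff[OF assms(1)]
    by meson
qed

end
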